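(* Let $(M,\rho)$ be a complete metric space and let $f,g:M\to\mathbb{R}\cup\{+\infty\}$ be proper and lower semicontinuous, with $f$ bounded below. Assume that for every $x\in\operatorname{dom}|\widetilde\nabla f|$ we have $x\in\operatorname{dom} g$ and $$|\widetilde\nabla g|(x)\le|\widetilde\nabla f|(x).$$ Then $$\inf_{x\in\operatorname{dom} f}(f(x)-g(x))\ge\inf_M f-\inf_M g.$$ In particular $\inf_M g>-\infty$, and $f(x)-\inf_M f\ge g(x)-\inf_M g$ for all $x\in M$.
   Context: $\operatorname{dom} f:=\{x:f(x)<+\infty\}$; $f$ proper if $\operatorname{dom} f\ne\varnothing$; on $\operatorname{dom} f$, $f(x)-g(x)=-\infty$ if $g(x)=+\infty$. $[t]^+:=\max\{0,t\}$ (with $[f(x)-f(y)]^+:=0$ if $f(y)=+\infty$). For $x\in\operatorname{dom} f$, the global slope is $|\widetilde\nabla f|(x):=\sup_{y\neq x}\frac{[f(x)-f(y)]^+}{\rho(x,y)}\in[0,+\infty]$, and $\operatorname{dom}|\widetilde\nabla f|:=\{x\in\operatorname{dom} f:\ |\widetilde\nabla f|(x)<+\infty\}$. *)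

theory Defs
  imports "HOL-Analysis.Analysis"
begin

definition lower_semicont :: "('a::metric_space \<Rightarrow> ereal) \<Rightarrow> bool" where
  "lower_semicont f \<longleftrightarrow> (\<forall>x. f x \<le> Liminf (at x) f)"

definition edom :: "('a \<Rightarrow> ereal) \<Rightarrow> 'a set" where
  "edom f = {x. f x < \<infinity>}"

text \<open>For x in the domain of f,
  f y = infinity gives f x - f y = -infinity and hence [.]^+ = 0, as in the paper's convention.\<close>
definition global_slope :: "('a::metric_space \<Rightarrow> ereal) \<Rightarrow> 'a \<Rightarrow> ereal" where
  "global_slope f x = (SUP y. if y = x then 0 else max 0 (f x - f y) / ereal (dist x y))"

definition slope_dom :: "('a::metric_space \<Rightarrow> ereal) \<Rightarrow> 'a set" where
  "slope_dom f = {x \<in> edom f. global_slope f x < \<infinity>}"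

end

theory Submission
  imports Defs
begin

text \<open>Ekeland's variational principle, applied with parameter \<open>L\<close>, produces points of finite
  global slope (at most \<open>L\<close>) close to any point of the domain of \<open>f\<close>. Starting from a point
  \<open>x\<close> of finite slope and applying it repeatedly with parameter \<open>q\<close> times the current slope
  gives a chain along which the slope of \<open>f\<close> decays geometrically while \<open>f\<close> drops by at least
  \<open>q |\<nabla>f|(u\<^sub>n) \<rho>(u\<^sub>n, u\<^sub>n\<^sub>+\<^sub>1)\<close>. As \<open>|\<nabla>g| \<le> |\<nabla>f|\<close> on the chain, \<open>g\<close> drops by at most
  \<open>1/q\<close> times the drop of \<open>f\<close>, which telescopes to at most \<open>(f x - inf f)/q\<close>; and the far end
  of the chain is compared with an arbitrary \<open>w\<close> through the slope of \<open>g\<close>, a term that becomes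
  arbitrarily small. Letting \<open>q \<rightarrow> 1\<close> gives \<open>g x - inf g \<le> f x - inf f\<close> for points of finite
  slope, and density of those points together with lower semicontinuity of \<open>g\<close> extends the
  inequality to the whole domain of \<open>f\<close>.\<close>

lemma global_slope_nonneg: "0 \<le> global_slope f x"
  unfolding global_slope_def by (rule SUP_upper2[where i = x]) auto

lemma global_slope_le_ereal_iff:
  fixes f :: "'a::metric_space \<Rightarrow> ereal"
  assumes fin: "f x \<noteq> \<infinity>" "f x \<noteq> -\<infinity>"
  shows "global_slope f x \<le> ereal L \<longleftrightarrow> 0 \<le> L \<and> (\<forall>y. f x \<le> f y + ereal (L * dist x y))"
proof -
  have term_le: "max 0 (f x - f y) / ereal (dist x y) \<le> ereal L \<longleftrightarrow> f x \<le> f y + ereal (L * dist x y)"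
    if "y \<noteq> x" "0 \<le> L" for y
  proof -
    have "max 0 (f x - f y) / ereal (dist x y) \<le> ereal L \<longleftrightarrow> f x - f y \<le> ereal (L * dist x y)"
      using that by (subst ereal_divide_le_pos) (auto simp: mult.commute)
    also have "\<dots> \<longleftrightarrow> f x \<le> f y + ereal (L * dist x y)"
      using fin by (cases "f x"; cases "f y") auto
    finally show ?thesis .
  qed
  show ?thesis
    unfolding global_slope_def SUP_le_iff
  proof safe
    assume le: "\<forall>y\<in>UNIV. (if y = x then 0 else max 0 (f x - f y) / ereal (dist x y)) \<le> ereal L"
    show L: "0 \<le> L" using le[rule_format, OF UNIV_I, of x] by simp
    show "f x \<le> f y + ereal (L * dist x y)" for y
    proof (cases "y = x")
      case False
      then show ?thesis using le[rule_format, OF UNIV_I, of y] term_le[OF False L] by simp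
    qed simp
  next
    assume "0 \<le> L" "\<forall>y. f x \<le> f y + ereal (L * dist x y)"
    then show "(if y = x then 0 else max 0 (f x - f y) / ereal (dist x y)) \<le> ereal L" for y
      using term_le[of y] by auto
  qed
qed

lemma lower_semicont_nhds:
  fixes f :: "'a::metric_space \<Rightarrow> ereal"
  assumes "lower_semicont f" and "t < f z"
  obtains d where "0 < d" and "\<And>u. dist u z < d \<Longrightarrow> t < f u"
proof -
  have "t < Liminf (at z) f"
    using assms unfolding lower_semicont_def by (metis less_le_trans)
  then have "eventually (\<lambda>u. t < f u) (at z)"
    using le_Liminf_iff by blast
  then obtain d where "0 < d" "\<And>u. u \<noteq> z \<Longrightarrow> dist u z < d \<Longrightarrow> t < f u"
    unfolding eventually_at by auto
  with \<open>t < f z\<close> show thesis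
    by (metis that)
qed

lemma lower_semicont_sequentially:
  fixes f :: "'a::metric_space \<Rightarrow> ereal"
  assumes lsc: "lower_semicont f" and lim: "y \<longlonglongrightarrow> z"
    and le: "\<And>n. f (y n) \<le> b n" and b: "b \<longlonglongrightarrow> B"
  shows "f z \<le> B"
proof (rule dense_le)
  fix t assume "t < f z"
  then obtain d where "0 < d" "\<And>u. dist u z < d \<Longrightarrow> t < f u"
    using lower_semicont_nhds[OF lsc] by blast
  moreover have "eventually (\<lambda>n. dist (y n) z < d) sequentially"
    using lim \<open>0 < d\<close> by (rule tendstoD)
  ultimately have "eventually (\<lambda>n. t \<le> b n) sequentially"
    by (auto elim!: eventually_mono intro: order_trans[OF less_imp_le le])
  then show "t \<le> B"
    using b by (intro tendsto_le[OF _ _ tendsto_const]) auto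
qed

definition ekeland_set :: "('a::metric_space \<Rightarrow> ereal) \<Rightarrow> real \<Rightarrow> 'a \<Rightarrow> 'a set" where
  "ekeland_set f L x = {y. f y + ereal (L * dist x y) \<le> f x}"

lemma ekeland_set_refl: "x \<in> ekeland_set f L x"
  unfolding ekeland_set_def by simp

lemma ekeland_set_trans:
  assumes "0 \<le> L" "y \<in> ekeland_set f L x" "z \<in> ekeland_set f L y"
  shows "z \<in> ekeland_set f L x"
proof -
  have "L * dist x z \<le> L * dist y z + L * dist x y"
    using assms(1) dist_triangle[of x z y] by (simp add: mult_left_mono distrib_left[symmetric] add.commute)
  then have "f z + ereal (L * dist x z) \<le> f z + ereal (L * dist y z) + ereal (L * dist x y)"
    by (metis add.assoc add_left_mono ereal_less_eq(3) plus_ereal.simps(1))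
  also have "\<dots> \<le> f y + ereal (L * dist x y)"
    using assms(3) unfolding ekeland_set_def by (intro add_right_mono) simp
  also have "\<dots> \<le> f x"
    using assms(2) unfolding ekeland_set_def by simp
  finally show ?thesis
    unfolding ekeland_set_def by simp
qed

lemma closed_ekeland_set:
  fixes f :: "'a::metric_space \<Rightarrow> ereal"
  assumes "lower_semicont f"
  shows "closed (ekeland_set f L x)"
proof (rule closed_sequential_limits[THEN iffD2], intro allI impI, elim conjE)
  fix y z assume mem: "\<forall>n. y n \<in> ekeland_set f L x" and lim: "y \<longlonglongrightarrow> z"
  have "f (y n) \<le> f x - ereal (L * dist x (y n))" for n
    using mem ereal_le_minus[of "ereal (L * dist x (y n))"] unfolding ekeland_set_def by simp
  moreover have "(\<lambda>n. f x - ereal (L * dist x (y n))) \<longlonglongrightarrow> f x - ereal (L * dist x z)"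
    by (cases "f x") (auto intro!: tendsto_diff tendsto_mult_left tendsto_dist lim)
  ultimately have "f z \<le> f x - ereal (L * dist x z)"
    by (rule lower_semicont_sequentially[OF assms lim])
  then show "z \<in> ekeland_set f L x"
    using ereal_le_minus[of "ereal (L * dist x z)"] unfolding ekeland_set_def by simp
qed

lemma ex_small_diameter:
  fixes c :: "nat \<Rightarrow> 'a::metric_space"
  assumes L: "0 < L" and close: "\<And>n y. y \<in> T n \<Longrightarrow> L * dist (c n) y < 1 / Suc n"
    and e: "0 < e"
  shows "\<exists>n. \<forall>a\<in>T n. \<forall>b\<in>T n. dist a b < e"
proof -
  obtain n where n: "1 / real (Suc n) < L * e / 2"
    using L e by (auto intro: nat_approx_posE[of "L * e / 2"])
  have "dist a b < e" if "a \<in> T n" "b \<in> T n" for a b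
  proof -
    have "L * dist a b \<le> L * dist (c n) a + L * dist (c n) b"
      using L dist_triangle3[of a b "c n"] by (simp add: distrib_left[symmetric])
    also have "\<dots> < L * e"
      using close[OF that(1)] close[OF that(2)] n by linarith
    finally show ?thesis using L by simp
  qed
  then show ?thesis by blast
qed

lemma ekeland_set_le:
  assumes "0 \<le> L" "y \<in> ekeland_set f L x"
  shows "f y \<le> f x"
proof -
  have "f y \<le> f y + ereal (L * dist x y)"
    using assms(1) by (simp add: add_increasing2)
  also have "\<dots> \<le> f x"
    using assms(2) unfolding ekeland_set_def by simp
  finally show ?thesis .
qed

lemma ekeland_set_near_inf:
  assumes bdd: "\<And>x. ereal c \<le> f x" and x: "f x < \<infinity>" and e: "0 < e"
  obtains y where "y \<in> ekeland_set f L x"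
    and "f y < (INF v\<in>ekeland_set f L x. f v) + ereal e"
proof -
  let ?I = "INF v\<in>ekeland_set f L x. f v"
  have "ereal c \<le> ?I" by (rule INF_greatest) (rule bdd)
  moreover have "?I \<le> f x" by (rule INF_lower) (rule ekeland_set_refl)
  ultimately have "?I < ?I + ereal e"
    using x e by (cases ?I) auto
  then show thesis using that by (auto simp: INF_less_iff)
qed

lemma ekeland_set_small:
  assumes bdd: "\<And>x. ereal c \<le> f x" and L: "0 \<le> L" and x: "f x < \<infinity>"
    and y: "y \<in> ekeland_set f L x" and y_inf: "f y < (INF v\<in>ekeland_set f L x. f v) + ereal e"
    and z: "z \<in> ekeland_set f L y"
  shows "L * dist y z < e"
proof -
  have "f z + ereal (L * dist y z) \<le> f y"
    using z unfolding ekeland_set_def by simp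
  also have "\<dots> < (INF v\<in>ekeland_set f L x. f v) + ereal e"
    by (rule y_inf)
  also have "\<dots> \<le> f z + ereal e"
    using ekeland_set_trans[OF L y z] by (intro add_right_mono INF_lower)
  finally have "f z + ereal (L * dist y z) < f z + ereal e" .
  moreover have "f z \<le> f x"
    using ekeland_set_le[OF L y] ekeland_set_le[OF L z] by (rule order_trans[rotated])
  then have "\<bar>f z\<bar> \<noteq> \<infinity>"
    using x bdd[of z] by auto
  ultimately show ?thesis by (cases "f z") auto
qed

lemma ekeland_sequence:
  assumes bdd: "\<And>x. ereal c \<le> f x" and L: "0 \<le> L" and x0: "f x0 < \<infinity>"
  obtains u where "u 0 = x0" and "\<And>n. u (Suc n) \<in> ekeland_set f L (u n)"
    and "\<And>n y. y \<in> ekeland_set f L (u (Suc n)) \<Longrightarrow> L * dist (u (Suc n)) y < 1 / Suc n"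
proof -
  define step where "step n x = (SOME y. y \<in> ekeland_set f L x
      \<and> f y < (INF v\<in>ekeland_set f L x. f v) + ereal (1 / Suc n))" for n x
  have step: "step n x \<in> ekeland_set f L x
      \<and> f (step n x) < (INF v\<in>ekeland_set f L x. f v) + ereal (1 / Suc n)"
    if "f x < \<infinity>" for n x
    unfolding step_def
    by (rule someI_ex) (use ekeland_set_near_inf[where f = f, OF bdd that, of "1 / Suc n" L] in auto)
  define u where "u = rec_nat x0 step"
  have u_Suc: "u (Suc n) = step n (u n)" for n
    by (simp add: u_def)
  have u_fin: "f (u n) < \<infinity>" for n
  proof (induction n)
    case (Suc n)
    then show ?case
      using ekeland_set_le[OF L] step[OF Suc] u_Suc[of n] by (metis le_less_trans)
  qed (use x0 in \<open>simp add: u_def\<close>)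
  show thesis
  proof (rule that)
    show "u 0 = x0" by (simp add: u_def)
    show "u (Suc n) \<in> ekeland_set f L (u n)" for n
      using step[OF u_fin] u_Suc by simp
    show "L * dist (u (Suc n)) y < 1 / Suc n" if "y \<in> ekeland_set f L (u (Suc n))" for n y
      using ekeland_set_small[where f = f, OF bdd L u_fin[of n] _ _ that] step[OF u_fin, of n n] u_Suc[of n]
      by simp
  qed
qed

lemma ekeland_variational_principle:
  fixes f :: "'a::{metric_space,complete_space} \<Rightarrow> ereal"
  assumes lsc: "lower_semicont f" and bdd: "\<And>x. ereal c \<le> f x"
    and x0: "f x0 < \<infinity>" and L: "0 < L"
  obtains z where "f z + ereal (L * dist x0 z) \<le> f x0"
    and "\<And>y. y \<noteq> z \<Longrightarrow> f z < f y + ereal (L * dist z y)"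
proof -
  define S where "S = ekeland_set f L"
  have trans: "y \<in> S x \<Longrightarrow> z \<in> S y \<Longrightarrow> z \<in> S x" for x y z
    unfolding S_def using ekeland_set_trans[of L y f x z] L by simp
  obtain u where u0: "u 0 = x0" and u_step: "\<And>n. u (Suc n) \<in> S (u n)"
    and small: "\<And>n y. y \<in> S (u (Suc n)) \<Longrightarrow> L * dist (u (Suc n)) y < 1 / Suc n"
    using ekeland_sequence[where f = f, OF bdd less_imp_le[OF L] x0] unfolding S_def by blast
  have "\<exists>z. \<Inter>(range (\<lambda>n. S (u n))) = {z}"
  proof (rule decreasing_closed_nest_sing)
    show "closed (S (u n))" for n
      unfolding S_def by (rule closed_ekeland_set[OF lsc])
    show "S (u n) \<noteq> {}" for n
      unfolding S_def using ekeland_set_refl by blast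
    show "S (u n) \<subseteq> S (u m)" if "m \<le> n" for m n
      using trans u_step by (intro lift_Suc_antimono_le[of "\<lambda>n. S (u n)", OF _ that]) blast
    fix e :: real assume "0 < e"
    have "\<exists>n. \<forall>a\<in>S (u (Suc n)). \<forall>b\<in>S (u (Suc n)). dist a b < e"
      using L small \<open>0 < e\<close> by (rule ex_small_diameter)
    then show "\<exists>n. \<forall>a\<in>S (u n). \<forall>b\<in>S (u n). dist a b < e" by blast
  qed
  then obtain z where z: "\<Inter>(range (\<lambda>n. S (u n))) = {z}" by blast
  show thesis
  proof
    have "z \<in> S x0" using z u0 by blast
    then show "f z + ereal (L * dist x0 z) \<le> f x0"
      unfolding S_def ekeland_set_def by simp
  next
    fix y assume "y \<noteq> z"
    have "z \<in> S (u n)" for n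
      using z by blast
    then have "S z \<subseteq> \<Inter>(range (\<lambda>n. S (u n)))"
      using trans by blast
    then have "y \<notin> S z" using z \<open>y \<noteq> z\<close> by auto
    then show "f z < f y + ereal (L * dist z y)"
      unfolding S_def ekeland_set_def by simp
  qed
qed

lemma slope_dom_finite:
  assumes "x \<in> slope_dom f" and "f x \<noteq> -\<infinity>"
  shows "\<bar>f x\<bar> \<noteq> \<infinity>" and "\<bar>global_slope f x\<bar> \<noteq> \<infinity>"
  using assms global_slope_nonneg[of f x] unfolding slope_dom_def edom_def by auto

lemma ekeland_slope_dom:
  fixes f :: "'a::{metric_space,complete_space} \<Rightarrow> ereal"
  assumes lsc: "lower_semicont f" and bdd: "\<And>x. ereal c \<le> f x"
    and x0: "f x0 < \<infinity>" and L: "0 < L"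
  obtains z where "f z + ereal (L * dist x0 z) \<le> f x0"
    and "z \<in> slope_dom f" and "global_slope f z \<le> ereal L"
proof -
  obtain z where z: "f z + ereal (L * dist x0 z) \<le> f x0"
    and strict: "\<And>y. y \<noteq> z \<Longrightarrow> f z < f y + ereal (L * dist z y)"
    using ekeland_variational_principle[OF assms] by blast
  have "f z \<le> f z + ereal (L * dist x0 z)"
    using L by (simp add: add_increasing2)
  then have fz: "f z \<noteq> \<infinity>" "f z \<noteq> -\<infinity>"
    using z x0 bdd[of z] by auto
  have "f z \<le> f y + ereal (L * dist z y)" for y
    using strict[of y] by (cases "y = z") auto
  then have slope: "global_slope f z \<le> ereal L"
    using global_slope_le_ereal_iff[of f z, OF fz] L by simp
  then have "z \<in> slope_dom f"
    unfolding slope_dom_def edom_def using fz by (auto simp: less_top[symmetric])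
  then show thesis using z slope that by blast
qed

lemma slope_dom_dense:
  fixes f :: "'a::{metric_space,complete_space} \<Rightarrow> ereal"
  assumes lsc: "lower_semicont f" and bdd: "\<And>x. ereal c \<le> f x"
    and x: "x \<in> edom f" and e: "0 < e"
  obtains z where "z \<in> slope_dom f" and "dist z x < e" and "f z \<le> f x"
proof -
  obtain r where r: "f x = ereal r"
    using x bdd[of x] unfolding edom_def by (cases "f x") auto
  define L where "L = (r - c) / e + 1"
  have "0 \<le> (r - c) / e"
    using bdd[of x] r e by simp
  then have L: "0 < L" unfolding L_def by linarith
  obtain z where z: "f z + ereal (L * dist x z) \<le> f x" "z \<in> slope_dom f"
    using ekeland_slope_dom[OF lsc bdd _ L, of x] r by auto
  have "ereal c + ereal (L * dist x z) \<le> f z + ereal (L * dist x z)"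
    using bdd[of z] by (rule add_right_mono)
  also have "\<dots> \<le> ereal r"
    using z(1) r by simp
  finally have "L * dist x z \<le> r - c" by simp
  moreover have "L * e = r - c + e"
    using e unfolding L_def by (simp add: field_simps)
  ultimately have "L * dist x z < L * e"
    using e by simp
  then have "dist z x < e"
    using L by (simp add: dist_commute)
  moreover have "f z \<le> f z + ereal (L * dist x z)"
    using L by (simp add: add_increasing2)
  ultimately show thesis
    using that z order_trans by blast
qed

lemma le_on_edom_of_le_on_slope_dom:
  fixes f g :: "'a::{metric_space,complete_space} \<Rightarrow> ereal"
  assumes f_lsc: "lower_semicont f" and bdd: "\<And>x. ereal c \<le> f x"
    and g_lsc: "lower_semicont g"
    and le: "\<And>z. z \<in> slope_dom f \<Longrightarrow> g z \<le> f z + ereal k"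
    and x: "x \<in> edom f"
  shows "g x \<le> f x + ereal k"
proof (rule dense_le)
  fix t assume "t < g x"
  then obtain d where "0 < d" and near: "\<And>u. dist u x < d \<Longrightarrow> t < g u"
    using lower_semicont_nhds[OF g_lsc] by blast
  then obtain z where z: "z \<in> slope_dom f" "dist z x < d" "f z \<le> f x"
    using slope_dom_dense[OF f_lsc bdd x] by blast
  have "t < g z" using near z(2) .
  also have "\<dots> \<le> f z + ereal k" using le z(1) .
  also have "\<dots> \<le> f x + ereal k" using z(3) by (rule add_right_mono)
  finally show "t \<le> f x + ereal k" by simp
qed

lemma perturbed_contraction_ex_less:
  fixes a b :: "nat \<Rightarrow> real"
  assumes q: "q < 1" and rec: "\<And>n. b (Suc n) \<le> q * b n + (a n - a (Suc n))"
    and bdd: "\<And>n. m \<le> a n" and \<eta>: "0 < \<eta>"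
  shows "\<exists>n. b n < \<eta>"
proof (rule ccontr)
  assume "\<not> ?thesis"
  then have ge: "\<eta> \<le> b n" for n by (simp add: not_less)
  have decay: "b n + (1 - q) * \<eta> * real n \<le> b 0 + a 0 - a n" for n
  proof (induction n)
    case (Suc n)
    have "(1 - q) * \<eta> \<le> (1 - q) * b n"
      using ge[of n] q by (intro mult_left_mono) auto
    then show ?case using Suc rec[of n] by (simp add: algebra_simps)
  qed simp
  have pos: "0 < (1 - q) * \<eta>" using q \<eta> by simp
  obtain n where "(b 0 + a 0 - m) / ((1 - q) * \<eta>) < real n"
    using reals_Archimedean2 by blast
  then have "b 0 + a 0 - m < (1 - q) * \<eta> * real n"
    using pos by (simp add: pos_divide_less_eq mult.commute)
  then show False using decay[of n] ge[of n] bdd[of n] \<eta> by linarith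
qed

lemma slope_descent_step:
  fixes f :: "'a::{metric_space,complete_space} \<Rightarrow> ereal"
  assumes lsc: "lower_semicont f" and bdd: "\<And>x. ereal c \<le> f x"
    and x: "x \<in> slope_dom f" and q: "0 < q"
  obtains z where "z \<in> slope_dom f"
    and "q * real_of_ereal (global_slope f x) * dist x z \<le> real_of_ereal (f x) - real_of_ereal (f z)"
    and "real_of_ereal (global_slope f z) \<le> q * real_of_ereal (global_slope f x)"
proof (cases "global_slope f x = 0")
  case True
  then show thesis using that[of x] x by simp
next
  case False
  have f_ninf: "f y \<noteq> -\<infinity>" for y using bdd[of y] by auto
  define L where "L = q * real_of_ereal (global_slope f x)"
  have "0 < real_of_ereal (global_slope f x)"
    using False global_slope_nonneg[of f x] slope_dom_finite(2)[OF x f_ninf]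
    by (cases "global_slope f x") auto
  then have L: "0 < L" unfolding L_def using q by simp
  have fx: "f x < \<infinity>" using x unfolding slope_dom_def edom_def by simp
  obtain z where z: "f z + ereal (L * dist x z) \<le> f x" "z \<in> slope_dom f"
    "global_slope f z \<le> ereal L"
    using ekeland_slope_dom[OF lsc bdd fx L] by blast
  obtain rx rz sz where "f x = ereal rx" "f z = ereal rz" "global_slope f z = ereal sz"
    using slope_dom_finite[OF x f_ninf] slope_dom_finite[OF z(2) f_ninf] by force
  then have "L * dist x z \<le> real_of_ereal (f x) - real_of_ereal (f z)"
    and "real_of_ereal (global_slope f z) \<le> L"
    using z(1,3) by simp_all
  then show thesis using that z(2) unfolding L_def by blast
qed

lemma slope_descent_sequence:
  fixes f :: "'a::{metric_space,complete_space} \<Rightarrow> ereal"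
  assumes lsc: "lower_semicont f" and bdd: "\<And>x. ereal c \<le> f x"
    and x0: "x0 \<in> slope_dom f" and q: "0 < q"
  obtains u where "u 0 = x0" and "\<And>n. u n \<in> slope_dom f"
    and "\<And>n. q * real_of_ereal (global_slope f (u n)) * dist (u n) (u (Suc n))
               \<le> real_of_ereal (f (u n)) - real_of_ereal (f (u (Suc n)))"
    and "\<And>n. real_of_ereal (global_slope f (u (Suc n))) \<le> q * real_of_ereal (global_slope f (u n))"
proof -
  have "\<forall>x\<in>slope_dom f. \<exists>z. z \<in> slope_dom f
      \<and> q * real_of_ereal (global_slope f x) * dist x z \<le> real_of_ereal (f x) - real_of_ereal (f z)
      \<and> real_of_ereal (global_slope f z) \<le> q * real_of_ereal (global_slope f x)"
    using slope_descent_step[OF lsc bdd _ q] by (metis (no_types, lifting))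
  then obtain step where step: "\<And>x. x \<in> slope_dom f \<Longrightarrow> step x \<in> slope_dom f
      \<and> q * real_of_ereal (global_slope f x) * dist x (step x) \<le> real_of_ereal (f x) - real_of_ereal (f (step x))
      \<and> real_of_ereal (global_slope f (step x)) \<le> q * real_of_ereal (global_slope f x)"
    by metis
  define u where "u n = (step ^^ n) x0" for n
  have u_dom: "u n \<in> slope_dom f" for n
    by (induction n) (use x0 step in \<open>simp_all add: u_def\<close>)
  show thesis
    by (rule that[of u]) (use u_dom step in \<open>simp_all add: u_def\<close>)
qed

lemma descent_chain_bound:
  fixes u :: "nat \<Rightarrow> 'a::metric_space" and F G :: "'a \<Rightarrow> real" and s :: "nat \<Rightarrow> real"
  assumes q: "0 < q" "q < 1" and s_nonneg: "\<And>n. 0 \<le> s n"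
    and descent: "\<And>n. q * s n * dist (u n) (u (Suc n)) \<le> F (u n) - F (u (Suc n))"
    and contract: "\<And>n. s (Suc n) \<le> q * s n" and bdd: "\<And>n. m \<le> F (u n)"
    and G_step: "\<And>n. G (u n) - G (u (Suc n)) \<le> s n * dist (u n) (u (Suc n))"
    and G_w: "\<And>n. G (u n) - G w \<le> s n * dist (u n) w" and \<eta>: "0 < \<eta>"
  shows "G (u 0) - G w \<le> (F (u 0) - m) / q + \<eta>"
proof -
  have G_chain: "G (u 0) - G (u n) \<le> (F (u 0) - F (u n)) / q" for n
  proof (induction n)
    case (Suc n)
    have "q * (G (u n) - G (u (Suc n))) \<le> q * (s n * dist (u n) (u (Suc n)))"
      using G_step[of n] q by (intro mult_left_mono) auto
    also have "\<dots> \<le> F (u n) - F (u (Suc n))"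
      using descent[of n] by (simp add: mult.assoc)
    finally have "G (u n) - G (u (Suc n)) \<le> (F (u n) - F (u (Suc n))) / q"
      using q by (simp add: pos_le_divide_eq mult.commute)
    then show ?case using Suc by (simp add: diff_divide_distrib)
  qed simp
  define b where "b n = s n * dist (u n) w" for n
  have "b (Suc n) \<le> q * b n + (F (u n) - F (u (Suc n)))" for n
  proof -
    have "b (Suc n) \<le> q * s n * (dist (u n) w + dist (u n) (u (Suc n)))"
      unfolding b_def using contract[of n] s_nonneg[of "Suc n"] q dist_triangle2[of "u (Suc n)" w "u n"]
      by (intro mult_mono) (auto simp: dist_commute)
    then show ?thesis
      using descent[of n] unfolding b_def by (simp add: algebra_simps)
  qed
  then have "\<exists>N. b N < \<eta>"
    using bdd by (rule perturbed_contraction_ex_less[OF q(2) _ _ \<eta>])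
  then obtain N where "G (u N) - G w < \<eta>"
    using G_w unfolding b_def by (meson le_less_trans)
  moreover have "(F (u 0) - F (u N)) / q \<le> (F (u 0) - m) / q"
    using bdd[of N] q by (simp add: divide_right_mono)
  ultimately show ?thesis
    using G_chain[of N] by linarith
qed

lemma slope_chain_bound:
  fixes f g :: "'a::{metric_space,complete_space} \<Rightarrow> ereal"
  assumes f_lsc: "lower_semicont f" and bdd: "\<And>x. ereal m \<le> f x"
    and g_ninf: "\<And>x. g x \<noteq> -\<infinity>"
    and g_slope: "\<And>x. x \<in> slope_dom f \<Longrightarrow> x \<in> edom g \<and> global_slope g x \<le> global_slope f x"
    and x0: "x0 \<in> slope_dom f" and w: "w \<in> edom g" and q: "0 < q" "q < 1" and \<eta>: "0 < \<eta>"
  shows "real_of_ereal (g x0) - real_of_ereal (g w) \<le> (real_of_ereal (f x0) - m) / q + \<eta>"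
proof -
  define F G s where "F x = real_of_ereal (f x)" and "G x = real_of_ereal (g x)"
    and "s x = real_of_ereal (global_slope f x)" for x
  have f_ninf: "f x \<noteq> -\<infinity>" for x using bdd[of x] by auto
  have finite: "f x = ereal (F x) \<and> g x = ereal (G x) \<and> global_slope f x = ereal (s x)"
    if "x \<in> slope_dom f" for x
    using slope_dom_finite[OF that f_ninf] g_slope[OF that] g_ninf[of x]
    unfolding F_def G_def s_def edom_def by (cases "g x") (auto simp: ereal_real')
  have g_lip: "G x - G y \<le> s x * dist x y" if x: "x \<in> slope_dom f" and y: "g y = ereal (G y)" for x y
  proof -
    have "global_slope g x \<le> ereal (s x)"
      using g_slope[OF x] finite[OF x] by simp
    then have "g x \<le> g y + ereal (s x * dist x y)"
      using global_slope_le_ereal_iff[of g x] finite[OF x] by simp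
    then show ?thesis using finite[OF x] y by simp
  qed
  have gw: "g w = ereal (G w)"
    using w g_ninf[of w] unfolding G_def edom_def by (cases "g w") auto
  obtain u where u0: "u 0 = x0" and u_dom: "\<And>n. u n \<in> slope_dom f"
    and descent: "\<And>n. q * s (u n) * dist (u n) (u (Suc n)) \<le> F (u n) - F (u (Suc n))"
    and contract: "\<And>n. s (u (Suc n)) \<le> q * s (u n)"
    using slope_descent_sequence[OF f_lsc bdd x0 q(1)] unfolding F_def s_def by blast
  have "G (u 0) - G w \<le> (F (u 0) - m) / q + \<eta>"
  proof (rule descent_chain_bound[where u = u and s = "\<lambda>n. s (u n)", OF q _ descent contract _ _ _ \<eta>])
    show "0 \<le> s (u n)" for n
      unfolding s_def by (simp add: global_slope_nonneg real_of_ereal_pos)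
    show "m \<le> F (u n)" for n
      using bdd[of "u n"] finite[OF u_dom] by simp
    show "G (u n) - G (u (Suc n)) \<le> s (u n) * dist (u n) (u (Suc n))" for n
      using g_lip[OF u_dom] finite[OF u_dom] by blast
    show "G (u n) - G w \<le> s (u n) * dist (u n) w" for n
      using g_lip[OF u_dom gw] .
  qed
  then show ?thesis
    unfolding u0 F_def G_def .
qed

lemma slope_dom_diff_le:
  fixes f g :: "'a::{metric_space,complete_space} \<Rightarrow> ereal"
  assumes f_lsc: "lower_semicont f" and bdd: "\<And>x. ereal m \<le> f x"
    and g_ninf: "\<And>x. g x \<noteq> -\<infinity>"
    and g_slope: "\<And>x. x \<in> slope_dom f \<Longrightarrow> x \<in> edom g \<and> global_slope g x \<le> global_slope f x"
    and x: "x \<in> slope_dom f"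
  shows "g x - f x + ereal m \<le> g w"
proof (cases "w \<in> edom g")
  case False
  then show ?thesis unfolding edom_def by simp
next
  case True
  define F G where "F y = real_of_ereal (f y)" and "G y = real_of_ereal (g y)" for y
  have "G x - G w \<le> F x - m"
  proof (rule field_le_epsilon)
    fix e :: real assume e: "0 < e"
    define A where "A = F x - m"
    have A: "0 \<le> A"
      using bdd[of x] slope_dom_finite(1)[OF x] unfolding A_def F_def
      by (cases "f x") auto
    define q where "q = (A + 1) / (A + 1 + e / 2)"
    have q: "0 < q" "q < 1"
      unfolding q_def using A e by auto
    have "G x - G w \<le> A / q + e / 2"
      using slope_chain_bound[OF f_lsc bdd g_ninf g_slope x True q, of "e / 2"] e
      unfolding A_def F_def G_def by simp
    also have "A / q = A + e / 2 * (A / (A + 1))"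
      unfolding q_def using A by (simp add: field_simps)
    also have "\<dots> \<le> A + e / 2"
      using A e by (intro add_left_mono mult_left_le) auto
    finally show "G x - G w \<le> F x - m + e"
      unfolding A_def by simp
  qed
  moreover have "\<bar>f x\<bar> \<noteq> \<infinity>" "\<bar>g x\<bar> \<noteq> \<infinity>" "\<bar>g w\<bar> \<noteq> \<infinity>"
    using slope_dom_finite(1)[OF x] bdd[of x] g_slope[OF x] True g_ninf
    unfolding edom_def by auto
  ultimately show ?thesis
    unfolding F_def G_def by (cases "f x"; cases "g x"; cases "g w") auto
qed

lemma INF_eq_ereal:
  fixes h :: "'b \<Rightarrow> ereal"
  assumes "\<And>x. b \<le> h x" and "b \<noteq> -\<infinity>" and "h x1 < \<infinity>"
  obtains r where "(INF x. h x) = ereal r"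
proof -
  have "b \<le> (INF x. h x)" using assms(1) by (rule INF_greatest)
  moreover have "(INF x. h x) \<le> h x1" by (rule INF_lower) simp
  ultimately show thesis
    using that assms(2,3) by (cases "INF x. h x") auto
qed

theorem theorem3p3:
  fixes f g :: "'a::{metric_space, complete_space} \<Rightarrow> ereal"
  assumes f_nonneginf: "\<And>x. f x \<noteq> -\<infinity>"
      and g_nonneginf: "\<And>x. g x \<noteq> -\<infinity>"
      and f_proper: "edom f \<noteq> {}"
      and g_proper: "edom g \<noteq> {}"
      and f_lsc: "lower_semicont f"
      and g_lsc: "lower_semicont g"
      and f_bdd: "\<exists>c::real. \<forall>x. ereal c \<le> f x"
      and slope_le: "\<And>x. x \<in> slope_dom f \<Longrightarrow> x \<in> edom g \<and> global_slope g x \<le> global_slope f x"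
  shows "(INF x\<in>edom f. f x - g x) \<ge> (INF x. f x) - (INF x. g x)
         \<and> (INF x. g x) > -\<infinity>
         \<and> (\<forall>x. f x - (INF y. f y) \<ge> g x - (INF y. g y))"
proof -
  obtain c where c: "\<And>x. ereal c \<le> f x" using f_bdd by blast
  obtain x1 where x1: "f x1 < \<infinity>" using f_proper unfolding edom_def by blast
  obtain w1 where w1: "g w1 < \<infinity>" using g_proper unfolding edom_def by blast
  obtain m where m: "(INF x. f x) = ereal m"
    using INF_eq_ereal[where h = f, OF c _ x1] by auto
  have f_ge: "ereal m \<le> f x" for x using INF_lower[of x UNIV f] m by simp
  obtain x0 where x0: "x0 \<in> slope_dom f"
    using ekeland_slope_dom[OF f_lsc c x1 zero_less_one] by blast
  have gap: "g z - f z + ereal m \<le> g x" if "z \<in> slope_dom f" for z x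
    by (rule slope_dom_diff_le[OF f_lsc f_ge g_nonneginf slope_le that])
  have "g x0 - f x0 + ereal m \<noteq> -\<infinity>"
    using slope_dom_finite(1)[OF x0 f_nonneginf] g_nonneginf[of x0] by (cases "f x0"; cases "g x0") auto
  then obtain mg where mg: "(INF x. g x) = ereal mg"
    using INF_eq_ereal[where h = g, OF gap[OF x0] _ w1] by auto
  have "g z \<le> f z + ereal (mg - m)" if "z \<in> slope_dom f" for z
    using INF_greatest[of UNIV "g z - f z + ereal m" g, OF gap[OF that]] mg
      slope_dom_finite(1)[OF that f_nonneginf] g_nonneginf[of z]
    by (cases "f z"; cases "g z") auto
  then have g_le: "g x \<le> f x + ereal (mg - m)" if "x \<in> edom f" for x
    using le_on_edom_of_le_on_slope_dom[OF f_lsc c g_lsc _ that] by blast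
  have gap_edom: "ereal m - ereal mg \<le> f x - g x" if "x \<in> edom f" for x
    using g_le[OF that] that f_nonneginf[of x] g_nonneginf[of x]
    unfolding edom_def by (cases "f x"; cases "g x") auto
  have "g x - ereal mg \<le> f x - ereal m" for x
    using g_le[of x] f_nonneginf[of x] g_nonneginf[of x]
    unfolding edom_def by (cases "f x"; cases "g x") auto
  then show ?thesis
    using gap_edom m mg by (auto intro: INF_greatest)
qed

end
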